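(* Let $\mathfrak{A}$ be a unital $\mathrm{C}^*$-algebra and $\mathfrak{S}\subset\mathfrak{A}$ an operator system. Let $\pi:\mathfrak{A}\to B(\mathcal{H})$ be a unital $*$-representation and $\Pi:\mathfrak{A}\to B(\mathcal{H})$ a unital completely positive map with $\Pi|_{\mathfrak{S}}=\pi|_{\mathfrak{S}}$. Let $\psi$ be a state on $\mathfrak{A}$ admitting a characteristic sequence $(\Delta_n)_n$ with $\Delta_n\in\mathfrak{S}$ for all $n$. Then for every $a\in\mathfrak{A}$, \[\limsup_{n\to\infty}\|(\Pi(a)-\pi(a))\pi(\Delta_n)\|\le 2\operatorname{dist}(\sigma_\psi(a),\sigma_\psi(\mathfrak{S}))\] and \[\lim_{n\to\infty}\|\pi(\Delta_n)^*(\Pi(a)-\pi(a))\pi(\Delta_n)\|=0.\]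
   Context: An operator system is a unital self-adjoint subspace of $\mathfrak{A}$. $\sigma_\psi$ denotes the GNS representation of the state $\psi$. A sequence $(\Delta_n)_n$ in $\mathfrak{A}$ is a characteristic sequence for $\psi$ if (a) $\|\Delta_n\|=1$ for all $n$, (b) $\lim_{n\to\infty}\psi(\Delta_n)=1$, and (c) $\limsup_{n\to\infty}\|\Delta_n^*a\Delta_n\|\le|\psi(a)|$ for every $a\in\mathfrak{A}$. *)

theory Defs
  imports "HOL-Analysis.Analysis" "HOL-Library.Liminf_Limsup"
begin

class cvector = ab_group_add +
  fixes scaleC :: "complex \<Rightarrow> 'a \<Rightarrow> 'a" (infixr "*\<^sub>C" 75)
  assumes scaleC_add_right: "c *\<^sub>C (x + y) = c *\<^sub>C x + c *\<^sub>C y"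
    and scaleC_add_left: "(c + d) *\<^sub>C x = c *\<^sub>C x + d *\<^sub>C x"
    and scaleC_scaleC: "c *\<^sub>C (d *\<^sub>C x) = (c * d) *\<^sub>C x"
    and scaleC_one: "1 *\<^sub>C x = x"

class chilbert = cvector + real_normed_vector + complete_space +
  fixes cinner :: "'a \<Rightarrow> 'a \<Rightarrow> complex"
  assumes chilbert_scaleR_scaleC: "scaleR r x = complex_of_real r *\<^sub>C x"
    and cinner_add_left: "cinner (x + y) z = cinner x z + cinner y z"
    and cinner_scaleC_left: "cinner (c *\<^sub>C x) y = cnj c * cinner x y"
    and cinner_commute: "cinner y x = cnj (cinner x y)"
    and cinner_pos: "Im (cinner x x) = 0 \<and> Re (cinner x x) \<ge> 0"
    and cinner_zero_iff: "cinner x x = 0 \<longleftrightarrow> x = 0"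
    and norm_cinner: "norm x = sqrt (Re (cinner x x))"

class cstar_algebra = cvector + real_normed_algebra_1 + banach +
  fixes cstar :: "'a \<Rightarrow> 'a"
  assumes cstar_scaleR_scaleC: "scaleR r x = complex_of_real r *\<^sub>C x"
    and scaleC_mult_left: "(c *\<^sub>C x) * y = c *\<^sub>C (x * y)"
    and scaleC_mult_right: "x * (c *\<^sub>C y) = c *\<^sub>C (x * y)"
    and cstar_cstar: "cstar (cstar x) = x"
    and cstar_add: "cstar (x + y) = cstar x + cstar y"
    and cstar_scaleC: "cstar (c *\<^sub>C x) = cnj c *\<^sub>C cstar x"
    and cstar_mult: "cstar (x * y) = cstar y * cstar x"
    and cstar_identity: "norm (cstar x * x) = (norm x)\<^sup>2"

definition operator_system :: "'a::cstar_algebra set \<Rightarrow> bool" where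
  "operator_system S \<longleftrightarrow> 1 \<in> S \<and> 0 \<in> S
     \<and> (\<forall>x\<in>S. \<forall>y\<in>S. x + y \<in> S)
     \<and> (\<forall>c. \<forall>x\<in>S. c *\<^sub>C x \<in> S)
     \<and> (\<forall>x\<in>S. cstar x \<in> S)"

text \<open>Positive elements of a C*-algebra are exactly those of the form b* b.\<close>
definition is_state :: "('a::cstar_algebra \<Rightarrow> complex) \<Rightarrow> bool" where
  "is_state \<psi> \<longleftrightarrow> (\<forall>x y. \<psi> (x + y) = \<psi> x + \<psi> y)
     \<and> (\<forall>c x. \<psi> (c *\<^sub>C x) = c * \<psi> x)
     \<and> (\<forall>b. Im (\<psi> (cstar b * b)) = 0 \<and> Re (\<psi> (cstar b * b)) \<ge> 0)
     \<and> \<psi> 1 = 1"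

definition bounded_op :: "('h::chilbert \<Rightarrow> 'h) \<Rightarrow> bool" where
  "bounded_op T \<longleftrightarrow> (\<forall>x y. T (x + y) = T x + T y) \<and> (\<forall>c x. T (c *\<^sub>C x) = c *\<^sub>C T x)
     \<and> (\<exists>K. \<forall>x. norm (T x) \<le> K * norm x)"

definition opnorm :: "('h::chilbert \<Rightarrow> 'h) \<Rightarrow> real" where
  "opnorm T = (SUP x\<in>{x. norm x \<le> 1}. norm (T x))"

definition linear_map_BH :: "('a::cstar_algebra \<Rightarrow> 'h::chilbert \<Rightarrow> 'h) \<Rightarrow> bool" where
  "linear_map_BH \<Phi> \<longleftrightarrow> (\<forall>a. bounded_op (\<Phi> a))
     \<and> (\<forall>a b h. \<Phi> (a + b) h = \<Phi> a h + \<Phi> b h)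
     \<and> (\<forall>c a h. \<Phi> (c *\<^sub>C a) h = c *\<^sub>C \<Phi> a h)"

definition unital_star_rep :: "('a::cstar_algebra \<Rightarrow> 'h::chilbert \<Rightarrow> 'h) \<Rightarrow> bool" where
  "unital_star_rep \<pi> \<longleftrightarrow> linear_map_BH \<pi>
     \<and> (\<forall>a b h. \<pi> (a * b) h = \<pi> a (\<pi> b h))
     \<and> (\<forall>h. \<pi> 1 h = h)
     \<and> (\<forall>a h k. cinner (\<pi> (cstar a) h) k = cinner h (\<pi> a k))"

text \<open>Complete positivity: for every n, the amplification \<Phi>_n maps positive matrices
  of M_n(A) (i.e. matrices of the form Y* Y, with entries sum_k y_ki* y_kj) to positive
  operators on H^n (i.e. sum_ij <h_i, \<Phi>(x_ij) h_j> \<ge> 0).\<close>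
definition completely_positive :: "('a::cstar_algebra \<Rightarrow> 'h::chilbert \<Rightarrow> 'h) \<Rightarrow> bool" where
  "completely_positive \<Phi> \<longleftrightarrow> (\<forall>(n::nat) (Y::nat \<Rightarrow> nat \<Rightarrow> 'a) (h::nat \<Rightarrow> 'h).
     let s = (\<Sum>i<n. \<Sum>j<n. cinner (h i) (\<Phi> (\<Sum>k<n. cstar (Y k i) * Y k j) (h j)))
     in Im s = 0 \<and> Re s \<ge> 0)"

definition ucp_map :: "('a::cstar_algebra \<Rightarrow> 'h::chilbert \<Rightarrow> 'h) \<Rightarrow> bool" where
  "ucp_map \<Phi> \<longleftrightarrow> linear_map_BH \<Phi> \<and> completely_positive \<Phi> \<and> (\<forall>h. \<Phi> 1 h = h)"

text \<open>Norm of the GNS operator \<sigma>_\<psi>(x): the operator norm on the dense subspace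
  A/N_\<psi> of H_\<psi>, where [b] has squared norm \<psi>(b* b) and \<sigma>_\<psi>(x)[b] = [x b].\<close>
definition gns_norm :: "('a::cstar_algebra \<Rightarrow> complex) \<Rightarrow> 'a \<Rightarrow> real" where
  "gns_norm \<psi> x = (SUP b\<in>{b. Re (\<psi> (cstar b * b)) \<le> 1}.
       sqrt (Re (\<psi> (cstar (x * b) * (x * b)))))"

text \<open>dist(\<sigma>_\<psi>(a), \<sigma>_\<psi>(S)) = inf_{s \<in> S} \<parallel>\<sigma>_\<psi>(a) - \<sigma>_\<psi>(s)\<parallel> = inf_{s\<in>S} \<parallel>\<sigma>_\<psi>(a - s)\<parallel>.\<close>
definition gns_dist :: "('a::cstar_algebra \<Rightarrow> complex) \<Rightarrow> 'a set \<Rightarrow> 'a \<Rightarrow> real" where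
  "gns_dist \<psi> S a = (INF s\<in>S. gns_norm \<psi> (a - s))"

definition characteristic_sequence :: "('a::cstar_algebra \<Rightarrow> complex) \<Rightarrow> (nat \<Rightarrow> 'a) \<Rightarrow> bool" where
  "characteristic_sequence \<psi> \<Delta> \<longleftrightarrow> (\<forall>n. norm (\<Delta> n) = 1)
     \<and> ((\<lambda>n. \<psi> (\<Delta> n)) \<longlonglongrightarrow> 1)
     \<and> (\<forall>a. limsup (\<lambda>n. ereal (norm (cstar (\<Delta> n) * a * \<Delta> n))) \<le> ereal (cmod (\<psi> a)))"

end

theory Submission
  imports Defs "HOL-Computational_Algebra.Formal_Power_Series"
begin

text \<open>
  Write \<open>D = \<pi>(\<Delta>\<^sub>n)\<close>. For the compressions one may assume \<open>\<psi>(a) = 0\<close>, subtracting a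
  multiple of \<open>1 \<in> S\<close>. Fix \<open>m\<close> with \<open>\<psi>(\<Delta>\<^sub>m)\<close> close to \<open>1\<close>; then the vectors \<open>D h\<close> are
  almost fixed by \<open>\<pi>(\<Delta>\<^sub>m) = \<Phi>(\<Delta>\<^sub>m)\<close>, so by Choi's inequality \<open>\<Phi>\<close> is almost multiplicative
  at \<open>\<Delta>\<^sub>m\<close> on them and \<open>\<langle>D g, \<Phi>(a) D h\<rangle> \<approx> \<langle>D g, \<Phi>(\<Delta>\<^sub>m\<^sup>* a \<Delta>\<^sub>m) D h\<rangle>\<close>. Both this and
  \<open>\<langle>D g, \<pi>(a) D h\<rangle>\<close> are bounded by norms of compressions \<open>\<Delta>\<^sup>* a \<Delta>\<close>, whose lim sup is
  \<open>|\<psi>(a)| = 0\<close>.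

  For the lim sup, put \<open>x = a - s\<close> with \<open>s \<in> S\<close>. Then \<open>\<parallel>\<pi>(x) D h\<parallel>\<^sup>2 \<le> \<parallel>\<Delta>\<^sub>n\<^sup>* x\<^sup>* x \<Delta>\<^sub>n\<parallel>\<close>,
  which tends to at most \<open>\<psi>(x\<^sup>* x)\<close>, and by the Kadison-Schwarz inequality and the first part
  applied to \<open>x\<^sup>* x\<close> the same bound holds asymptotically for \<open>\<parallel>\<Phi>(x) D h\<parallel>\<^sup>2\<close>. So the lim sup is
  at most \<open>2 \<psi>(x\<^sup>* x)\<^sup>1\<^sup>/\<^sup>2 \<le> 2 \<parallel>\<sigma>\<^sub>\<psi>(x)\<parallel>\<close>.
\<close>

context chilbert begin

lemma cinner_add_right: "cinner z (x + y) = cinner z x + cinner z y"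
  using cinner_commute[of z "x + y"] cinner_commute[of z x] cinner_commute[of z y]
    cinner_add_left[of x y z] by simp

lemma cinner_scaleC_right: "cinner y (c *\<^sub>C x) = c * cinner y x"
  using cinner_commute[of y "c *\<^sub>C x"] cinner_commute[of y x] cinner_scaleC_left[of c x y] by simp

lemma cinner_self: "cinner x x = complex_of_real ((norm x)\<^sup>2)"
  using cinner_pos[of x] norm_cinner[of x] by (simp add: complex_eq_iff)

lemma Re_cinner_self: "Re (cinner x x) = (norm x)\<^sup>2"
  by (simp add: cinner_self)

lemma norm_scaleC: "norm (c *\<^sub>C x) = cmod c * norm x"
proof -
  have "cinner (c *\<^sub>C x) (c *\<^sub>C x) = (cnj c * c) * cinner x x"
    by (simp add: cinner_scaleC_left cinner_scaleC_right mult.assoc)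
  also have "\<dots> = complex_of_real ((cmod c * norm x)\<^sup>2)"
    by (metis cinner_self complex_norm_square mult.commute of_real_mult power_mult_distrib)
  finally have "cinner (c *\<^sub>C x) (c *\<^sub>C x) = complex_of_real ((cmod c * norm x)\<^sup>2)" .
  hence "(norm (c *\<^sub>C x))\<^sup>2 = (cmod c * norm x)\<^sup>2"
    by (metis Re_cinner_self Re_complex_of_real)
  thus ?thesis by (rule power2_eq_imp_eq) auto
qed

lemma power2_norm_add: "(norm (x + y))\<^sup>2 = (norm x)\<^sup>2 + 2 * Re (cinner x y) + (norm y)\<^sup>2"
  using cinner_commute[of y x]
  by (simp add: Re_cinner_self[symmetric] cinner_add_left cinner_add_right)

lemma Re_cinner_le: "Re (cinner x y) \<le> norm x * norm y"
proof -
  have "(norm (x + y))\<^sup>2 \<le> (norm x + norm y)\<^sup>2"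
    by (simp add: power_mono norm_triangle_ineq)
  thus ?thesis unfolding power2_norm_add power2_sum by simp
qed

lemma norm_cinner_le: "cmod (cinner x y) \<le> norm x * norm y"
proof (cases "cinner x y = 0")
  case False
  have "cmod z = Re (cnj (sgn z) * z)" if "z \<noteq> 0" for z
    using that by (simp add: sgn_div_norm scaleR_conv_of_real field_simps cmod_power2
        power2_eq_square[symmetric])
  hence "cmod (cinner x y) = Re (cinner x (cnj (sgn (cinner x y)) *\<^sub>C y))"
    using False by (simp add: cinner_scaleC_right)
  also have "\<dots> \<le> norm x * norm y"
    using Re_cinner_le[of x "cnj (sgn (cinner x y)) *\<^sub>C y"] False by (simp add: norm_scaleC norm_sgn)
  finally show ?thesis .
qed simp

end

interpretation cinner_left: additive "\<lambda>x::'h::chilbert. cinner x y" for y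
  by unfold_locales (rule cinner_add_left)

interpretation cinner_right: additive "cinner (x::'h::chilbert)" for x
  by unfold_locales (rule cinner_add_right)

lemma power2_norm_diff:
  "(norm (x - y))\<^sup>2 = (norm x)\<^sup>2 - 2 * Re (cinner x y) + (norm (y::'h::chilbert))\<^sup>2"
  using power2_norm_add[of x "- y"] by (simp add: cinner_right.minus)

lemma norm_le_if_cinner_le:
  fixes v :: "'h::chilbert"
  assumes "\<And>g. norm g \<le> 1 \<Longrightarrow> cmod (cinner g v) \<le> B"
  shows "norm v \<le> B"
proof (cases "v = 0")
  case True
  thus ?thesis using assms[of 0] by (simp add: cinner_left.zero)
next
  case False
  have "cmod (cinner ((1 / norm v) *\<^sub>R v) v) = norm v"
    using False by (simp add: chilbert_scaleR_scaleC cinner_scaleC_left cinner_self power2_eq_square)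
  thus ?thesis using assms[of "(1 / norm v) *\<^sub>R v"] False by simp
qed

section \<open>Unital C*-algebras\<close>

interpretation cstar: additive "cstar :: 'a::cstar_algebra \<Rightarrow> 'a"
  by unfold_locales (rule cstar_add)

lemma cstar_one [simp]: "cstar (1::'a::cstar_algebra) = 1"
  using cstar_mult[of "cstar 1" "1::'a"] by (simp add: cstar_cstar)

lemma cstar_scaleR: "cstar (r *\<^sub>R (x::'a::cstar_algebra)) = r *\<^sub>R cstar x"
  by (simp only: cstar_scaleR_scaleC cstar_scaleC complex_cnj_complex_of_real)

lemma norm_cstar: "norm (cstar (x::'a::cstar_algebra)) = norm x"
proof -
  have le: "norm z \<le> norm (cstar z)" for z :: 'a
  proof -
    have "norm z * norm z \<le> norm (cstar z) * norm z"
      using norm_mult_ineq[of "cstar z" z] by (simp add: cstar_identity power2_eq_square)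
    thus ?thesis by (cases "z = 0") simp_all
  qed
  show ?thesis using le[of x] le[of "cstar x"] by (simp add: cstar_cstar)
qed

lemma bounded_linear_cstar: "bounded_linear (cstar :: 'a::cstar_algebra \<Rightarrow> 'a)"
  by (rule bounded_linear_intro[where K=1]) (simp_all add: cstar_add cstar_scaleR norm_cstar)

lemma cstar_power: "cstar (y::'a::cstar_algebra) = y \<Longrightarrow> cstar (y ^ k) = y ^ k"
  by (induction k) (simp_all add: cstar_mult power_commutes)

lemma abs_gbinomial_half_le_1: "\<bar>(1/2::real) gchoose k\<bar> \<le> 1"
proof (induction k)
  case (Suc k)
  have "of_nat (Suc k) * ((1/2::real) gchoose Suc k) = (1/2 - of_nat k) * ((1/2) gchoose k)"
    using gbinomial_mult_1[of "1/2::real" k] by (simp add: algebra_simps)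
  hence "of_nat (Suc k) * \<bar>(1/2::real) gchoose Suc k\<bar> = \<bar>1/2 - of_nat k\<bar> * \<bar>(1/2) gchoose k\<bar>"
    by (metis abs_mult abs_of_nat)
  also have "\<dots> \<le> of_nat (Suc k) * 1"
    using Suc.IH by (intro mult_mono) auto
  finally show ?case by simp
qed simp

lemma gbinomial_one: "(1::real) gchoose k = (if k \<le> 1 then 1 else 0)"
  using binomial_gbinomial[of 1 k] by (auto simp: binomial_eq_0 le_Suc_eq)

lemma gbinomial_half_convolution:
  "(\<Sum>i\<le>k. (((1/2::real) gchoose i) * (-1)^i) * (((1/2) gchoose (k - i)) * (-1)^(k - i)))
    = (-1)^k * (1 gchoose k)"
proof -
  have "(\<Sum>i\<le>k. (((1/2::real) gchoose i) * (-1)^i) * (((1/2) gchoose (k - i)) * (-1)^(k - i)))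
      = (\<Sum>i\<le>k. (-1)^k * (((1/2::real) gchoose i) * ((1/2) gchoose (k - i))))"
    by (intro sum.cong refl) (simp add: algebra_simps flip: power_add)
  also have "\<dots> = (-1)^k * ((1/2 + 1/2) gchoose k)"
    unfolding atMost_atLeast0 by (simp add: sum_distrib_left[symmetric] gbinomial_Vandermonde)
  finally show ?thesis by simp
qed

text \<open>The binomial series of \<open>(1 - y)\<^sup>1\<^sup>/\<^sup>2\<close>, squared by the Cauchy product and the Vandermonde
  identity, sums to \<open>1 - y\<close>.\<close>

lemma selfadjoint_sqrt_one_minus:
  fixes y :: "'a::cstar_algebra"
  assumes self: "cstar y = y" and small: "norm y < 1"
  shows "\<exists>c. cstar c = c \<and> c * c = 1 - y"
proof -
  define g where "g k = ((1/2::real) gchoose k) * (-1)^k" for k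
  define a where "a k = g k *\<^sub>R y^k" for k
  have norm_a: "norm (a k) \<le> norm y ^ k" for k
  proof -
    have "\<bar>g k\<bar> * norm (y ^ k) \<le> 1 * norm y ^ k"
      by (rule mult_mono) (simp_all add: g_def abs_mult abs_gbinomial_half_le_1 norm_power_ineq)
    thus ?thesis by (simp add: a_def)
  qed
  have summable_norm: "summable (\<lambda>k. norm (a k))"
    by (rule summable_comparison_test'[where N=0 and g="\<lambda>k. norm y ^ k"])
      (use small norm_a in \<open>auto intro: summable_geometric\<close>)
  define c where "c = suminf a"
  have "cstar c = (\<Sum>k. cstar (a k))"
    unfolding c_def
    by (rule bounded_linear.suminf[OF bounded_linear_cstar summable_norm_cancel[OF summable_norm]])
  also have "(\<lambda>k. cstar (a k)) = a"
    unfolding a_def by (simp add: cstar_scaleR cstar_power[OF self])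
  finally have "cstar c = c" by (simp add: c_def)
  have "c * c = (\<Sum>k. \<Sum>i\<le>k. a i * a (k - i))"
    unfolding c_def by (rule Cauchy_product[OF summable_norm summable_norm])
  also have "(\<lambda>k. \<Sum>i\<le>k. a i * a (k - i)) = (\<lambda>k. ((-1)^k * ((1::real) gchoose k)) *\<^sub>R y^k)"
  proof
    fix k
    have "a i * a (k - i) = (g i * g (k - i)) *\<^sub>R y^k" if "i \<le> k" for i
      using that by (simp add: a_def flip: power_add)
    thus "(\<Sum>i\<le>k. a i * a (k - i)) = ((-1)^k * ((1::real) gchoose k)) *\<^sub>R y^k"
      by (simp add: scaleR_sum_left[symmetric] g_def gbinomial_half_convolution)
  qed
  also have "(\<Sum>k. ((-1)^k * ((1::real) gchoose k)) *\<^sub>R y^k)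
      = (\<Sum>k\<in>{0,1}. ((-1)^k * ((1::real) gchoose k)) *\<^sub>R y^k)"
    by (rule suminf_finite) (auto simp: gbinomial_one)
  also have "\<dots> = 1 - y" by (simp add: gbinomial_one)
  finally show ?thesis using \<open>cstar c = c\<close> by blast
qed

lemma cstar_square_decomposition:
  fixes x :: "'a::cstar_algebra"
  assumes "norm x < t"
  shows "\<exists>c. cstar c * c = t\<^sup>2 *\<^sub>R 1 - cstar x * x"
proof -
  have t: "t > 0" using assms norm_ge_zero[of x] by linarith
  define y where "y = (1 / t\<^sup>2) *\<^sub>R (cstar x * x)"
  have "cstar y = y" by (simp add: y_def cstar_scaleR cstar_mult cstar_cstar)
  moreover have "norm y = (norm x)\<^sup>2 / t\<^sup>2"
    using t by (simp add: y_def cstar_identity)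
  hence "norm y < 1"
    using assms t by (simp add: power_strict_mono)
  ultimately obtain c where c: "cstar c = c" "c * c = 1 - y"
    using selfadjoint_sqrt_one_minus by blast
  have "cstar (t *\<^sub>R c) * (t *\<^sub>R c) = t\<^sup>2 *\<^sub>R (c * c)"
    by (simp add: cstar_scaleR c(1) power2_eq_square)
  also have "\<dots> = t\<^sup>2 *\<^sub>R 1 - cstar x * x"
    using t by (simp add: c(2) y_def scaleR_diff_right)
  finally show ?thesis by blast
qed

text \<open>For \<open>t > \<parallel>x\<parallel>\<close>, \<open>t\<^sup>2 f (b\<^sup>* b) - f ((x b)\<^sup>* (x b)) = f ((c b)\<^sup>* (c b))\<close> with \<open>c\<^sup>* c = t\<^sup>2 - x\<^sup>* x\<close>.\<close>

lemma positive_functional_sandwich_le: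
  fixes f :: "'a::cstar_algebra \<Rightarrow> complex"
  assumes add: "\<And>u v. f (u + v) = f u + f v" and scale: "\<And>c u. f (c *\<^sub>C u) = c * f u"
    and pos: "\<And>z. Re (f (cstar z * z)) \<ge> 0"
  shows "Re (f (cstar (x * b) * (x * b))) \<le> (norm x)\<^sup>2 * Re (f (cstar b * b))"
proof -
  interpret additive f by unfold_locales (rule add)
  have bound: "Re (f (cstar (x * b) * (x * b))) \<le> t\<^sup>2 * Re (f (cstar b * b))" if t: "norm x < t" for t
  proof -
    obtain c where c: "cstar c * c = t\<^sup>2 *\<^sub>R 1 - cstar x * x"
      using cstar_square_decomposition[OF t] by blast
    have "cstar (c * b) * (c * b) = cstar b * (cstar c * c) * b"
      by (simp add: cstar_mult mult.assoc)
    also have "\<dots> = t\<^sup>2 *\<^sub>R (cstar b * b) - cstar (x * b) * (x * b)"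
      by (simp add: c cstar_mult right_diff_distrib left_diff_distrib mult.assoc)
    finally have "Re (f (cstar (c * b) * (c * b))) = t\<^sup>2 * Re (f (cstar b * b)) - Re (f (cstar (x * b) * (x * b)))"
      by (simp add: diff scale cstar_scaleR_scaleC)
    thus ?thesis using pos[of "c * b"] by simp
  qed
  have "\<forall>\<^sub>F t in at_right (norm x). Re (f (cstar (x * b) * (x * b))) \<le> t\<^sup>2 * Re (f (cstar b * b))"
    using eventually_at_right_less by (rule eventually_mono) (rule bound)
  moreover have "((\<lambda>t. t\<^sup>2 * Re (f (cstar b * b))) \<longlongrightarrow> (norm x)\<^sup>2 * Re (f (cstar b * b))) (at_right (norm x))"
    by (intro tendsto_intros)
  ultimately show ?thesis
    by (intro tendsto_lowerbound) auto
qed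

lemma bounded_op_additive: "bounded_op T \<Longrightarrow> Modules.additive T"
  by unfold_locales (simp add: bounded_op_def)

lemma bounded_op_scaleC: "bounded_op T \<Longrightarrow> T (c *\<^sub>C x) = c *\<^sub>C T x"
  by (simp add: bounded_op_def)

lemma linear_map_BH_bounded_op: "linear_map_BH \<Phi> \<Longrightarrow> bounded_op (\<Phi> a)"
  by (simp add: linear_map_BH_def)

lemma linear_map_BH_additive: "linear_map_BH \<Phi> \<Longrightarrow> Modules.additive (\<lambda>a. \<Phi> a h)"
  by unfold_locales (simp add: linear_map_BH_def)

lemma linear_map_BH_scaleC: "linear_map_BH \<Phi> \<Longrightarrow> \<Phi> (c *\<^sub>C a) h = c *\<^sub>C \<Phi> a h"
  by (simp add: linear_map_BH_def)

lemma opnorm_le: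
  fixes T :: "'h::chilbert \<Rightarrow> 'h"
  assumes "\<And>h. norm h \<le> 1 \<Longrightarrow> norm (T h) \<le> B"
  shows "opnorm T \<le> B"
  unfolding opnorm_def by (rule cSUP_least) (use assms in \<open>auto intro: exI[of _ 0]\<close>)

lemma opnorm_nonneg:
  fixes T :: "'h::chilbert \<Rightarrow> 'h"
  assumes "\<And>h. norm h \<le> 1 \<Longrightarrow> norm (T h) \<le> B"
  shows "0 \<le> opnorm T"
  unfolding opnorm_def
  by (rule cSUP_upper2[where x=0]) (use assms in \<open>auto intro!: bdd_aboveI[of _ B]\<close>)

section \<open>Unital completely positive maps\<close>

text \<open>The matrix \<open>[v\<^sub>i\<^sup>* v\<^sub>j]\<close> is \<open>Y\<^sup>* Y\<close> for the matrix \<open>Y\<close> whose only nonzero row is \<open>v\<close>.\<close>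

lemma completely_positive_gram:
  fixes \<Phi> :: "'a::cstar_algebra \<Rightarrow> 'h::chilbert \<Rightarrow> 'h" and v :: "nat \<Rightarrow> 'a" and h :: "nat \<Rightarrow> 'h"
  assumes "completely_positive \<Phi>"
  shows "Im (\<Sum>i<n. \<Sum>j<n. cinner (h i) (\<Phi> (cstar (v i) * v j) (h j))) = 0 \<and>
    0 \<le> Re (\<Sum>i<n. \<Sum>j<n. cinner (h i) (\<Phi> (cstar (v i) * v j) (h j)))"
proof -
  define Y where "Y k i = (if k = 0 then v i else 0)" for k i :: nat
  have "(\<Sum>k<n. cstar (Y k i) * Y k j) = cstar (v i) * v j" if "i < n" for i j
  proof -
    have "(\<Sum>k<n. cstar (Y k i) * Y k j) = (\<Sum>k<n. if k = 0 then cstar (v i) * v j else 0)"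
      by (intro sum.cong) (simp_all add: Y_def cstar.zero)
    thus ?thesis using that by simp
  qed
  hence "(\<Sum>i<n. \<Sum>j<n. cinner (h i) (\<Phi> (cstar (v i) * v j) (h j)))
      = (\<Sum>i<n. \<Sum>j<n. cinner (h i) (\<Phi> (\<Sum>k<n. cstar (Y k i) * Y k j) (h j)))"
    by (intro sum.cong refl) simp
  moreover have "let s = \<Sum>i<n. \<Sum>j<n. cinner (h i) (\<Phi> (\<Sum>k<n. cstar (Y k i) * Y k j) (h j))
      in Im s = 0 \<and> 0 \<le> Re s"
    using assms unfolding completely_positive_def by blast
  ultimately show ?thesis by (simp add: Let_def)
qed

lemma ucp_map_linear: "ucp_map \<Phi> \<Longrightarrow> linear_map_BH \<Phi>"
  by (simp add: ucp_map_def)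

lemma ucp_map_completely_positive: "ucp_map \<Phi> \<Longrightarrow> completely_positive \<Phi>"
  by (simp add: ucp_map_def)

lemma ucp_map_unital: "ucp_map \<Phi> \<Longrightarrow> \<Phi> 1 h = h"
  by (simp add: ucp_map_def)

lemma ucp_positive:
  fixes \<Phi> :: "'a::cstar_algebra \<Rightarrow> 'h::chilbert \<Rightarrow> 'h"
  assumes "ucp_map \<Phi>"
  shows "Im (cinner h (\<Phi> (cstar z * z) h)) = 0 \<and> 0 \<le> Re (cinner h (\<Phi> (cstar z * z) h))"
  using completely_positive_gram[OF ucp_map_completely_positive[OF assms],
      where n=1 and v="\<lambda>_. z" and h="\<lambda>_. h"]
  by simp

lemma ucp_adjoint:
  fixes \<Phi> :: "'a::cstar_algebra \<Rightarrow> 'h::chilbert \<Rightarrow> 'h"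
  assumes u: "ucp_map \<Phi>"
  shows "cinner k (\<Phi> (cstar y) h) = cinner (\<Phi> y k) h"
proof -
  have Im_sum: "Im (cinner h (\<Phi> y k) + cinner k (\<Phi> (cstar y) h)) = 0" for h k
  proof -
    have "Im (cinner h (\<Phi> 1 h) + cinner h (\<Phi> y k) + (cinner k (\<Phi> (cstar y) h) + cinner k (\<Phi> (cstar y * y) k))) = 0"
      using completely_positive_gram[OF ucp_map_completely_positive[OF u], where n=2 and v="\<lambda>i. if i = 0 then 1 else y"
          and h="\<lambda>i. if i = 0 then h else k"]
      by (simp add: numeral_2_eq_2)
    thus ?thesis using ucp_positive[OF u, of k y] by (simp add: ucp_map_unital[OF u] cinner_self)
  qed
  define A where "A = cinner h (\<Phi> y k)"
  define C where "C = cinner k (\<Phi> (cstar y) h)"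
  have "Im (A + C) = 0" unfolding A_def C_def by (rule Im_sum)
  moreover have "Im (\<i> * A - \<i> * C) = 0"
    using Im_sum[of h "\<i> *\<^sub>C k"]
    by (simp add: A_def C_def bounded_op_scaleC[OF linear_map_BH_bounded_op[OF ucp_map_linear[OF u]]]
        cinner_scaleC_right cinner_scaleC_left)
  ultimately have "C = cnj A" by (simp add: complex_eq_iff)
  thus ?thesis by (simp add: A_def C_def cinner_commute[of "\<Phi> y k"])
qed

lemma ucp_Kadison_Schwarz:
  fixes \<Phi> :: "'a::cstar_algebra \<Rightarrow> 'h::chilbert \<Rightarrow> 'h"
  assumes u: "ucp_map \<Phi>"
  shows "(norm (\<Phi> x k))\<^sup>2 \<le> Re (cinner k (\<Phi> (cstar x * x) k))"
proof -
  define w where "w = \<Phi> x k"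
  have "0 \<le> Re (cinner (- w) (\<Phi> 1 (- w)) + cinner (- w) (\<Phi> x k)
      + (cinner k (\<Phi> (cstar x) (- w)) + cinner k (\<Phi> (cstar x * x) k)))"
    using completely_positive_gram[OF ucp_map_completely_positive[OF u], where n=2 and v="\<lambda>i. if i = 0 then 1 else x"
        and h="\<lambda>i. if i = 0 then - w else k"]
    by (simp add: numeral_2_eq_2)
  also have "\<dots> = Re (cinner k (\<Phi> (cstar x * x) k)) - (norm w)\<^sup>2"
    by (simp add: ucp_adjoint[OF u] ucp_map_unital[OF u] w_def cinner_left.minus cinner_right.minus
        Re_cinner_self)
  finally show ?thesis by (simp add: w_def)
qed

lemma ucp_sandwich_le:
  fixes \<Phi> :: "'a::cstar_algebra \<Rightarrow> 'h::chilbert \<Rightarrow> 'h"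
  assumes u: "ucp_map \<Phi>"
  shows "Re (cinner h (\<Phi> (cstar (x * b) * (x * b)) h)) \<le> (norm x)\<^sup>2 * Re (cinner h (\<Phi> (cstar b * b) h))"
proof (rule positive_functional_sandwich_le)
  interpret additive "\<lambda>a. \<Phi> a h" by (rule linear_map_BH_additive[OF ucp_map_linear[OF u]])
  show "cinner h (\<Phi> (u + v) h) = cinner h (\<Phi> u h) + cinner h (\<Phi> v h)" for u v
    by (simp add: add cinner_right.add)
  show "cinner h (\<Phi> (c *\<^sub>C u) h) = c * cinner h (\<Phi> u h)" for c u
    by (simp add: linear_map_BH_scaleC[OF ucp_map_linear[OF u]] cinner_scaleC_right)
  show "0 \<le> Re (cinner h (\<Phi> (cstar z * z) h))" for z
    using ucp_positive[OF u] by blast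
qed

lemma ucp_norm_le:
  fixes \<Phi> :: "'a::cstar_algebra \<Rightarrow> 'h::chilbert \<Rightarrow> 'h"
  assumes u: "ucp_map \<Phi>"
  shows "Re (cinner h (\<Phi> (cstar x * x) h)) \<le> (norm x)\<^sup>2 * (norm h)\<^sup>2"
  using ucp_sandwich_le[OF u, of h x 1] by (simp add: ucp_map_unital[OF u] Re_cinner_self)

lemma ucp_contractive:
  fixes \<Phi> :: "'a::cstar_algebra \<Rightarrow> 'h::chilbert \<Rightarrow> 'h"
  assumes u: "ucp_map \<Phi>"
  shows "norm (\<Phi> x h) \<le> norm x * norm h"
proof -
  have "(norm (\<Phi> x h))\<^sup>2 \<le> (norm x * norm h)\<^sup>2"
    using ucp_Kadison_Schwarz[OF u, of x h] ucp_norm_le[OF u, of h x] by (simp add: power_mult_distrib)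
  thus ?thesis by (rule power2_le_imp_le) simp
qed

text \<open>Positivity of the matrix \<open>[v\<^sub>i\<^sup>* v\<^sub>j]\<close> for \<open>v = (1, d, x\<^sup>*)\<close>, tested on the vectors
  \<open>(-(\<Phi>(d) h + \<Phi>(x\<^sup>*) k), h, k)\<close>.\<close>

lemma ucp_defect_form_nonneg:
  fixes \<Phi> :: "'a::cstar_algebra \<Rightarrow> 'h::chilbert \<Rightarrow> 'h"
  assumes u: "ucp_map \<Phi>"
  shows "0 \<le> (Re (cinner h (\<Phi> (cstar d * d) h)) - (norm (\<Phi> d h))\<^sup>2)
    + 2 * Re (cinner k (\<Phi> (x * d) h - \<Phi> x (\<Phi> d h))) + (norm x)\<^sup>2 * (norm k)\<^sup>2"
proof -
  define P where "P = \<Phi> d h"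
  define V where "V = \<Phi> (cstar x) k"
  define w where "w = P + V"
  have adj_d: "cinner h (\<Phi> (cstar d) z) = cinner P z" for z
    by (simp add: P_def ucp_adjoint[OF u])
  have adj_x: "cinner k (\<Phi> x z) = cinner V z" for z
    using ucp_adjoint[OF u, of k "cstar x" z] by (simp add: V_def cstar_cstar)
  have adj_xd: "cinner h (\<Phi> (cstar d * cstar x) k) = cinner (\<Phi> (x * d) h) k"
    using ucp_adjoint[OF u, of h "x * d" k] by (simp add: cstar_mult)
  have "0 \<le> Re (\<Sum>i<3. \<Sum>j<3. cinner ([- w, h, k] ! i) (\<Phi> (cstar ([1, d, cstar x] ! i) * [1, d, cstar x] ! j) ([- w, h, k] ! j)))"
    using completely_positive_gram[OF ucp_map_completely_positive[OF u]] by blast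
  hence "0 \<le> Re (cinner w w) - Re (cinner w P) - Re (cinner w V)
      - Re (cinner P w) + Re (cinner h (\<Phi> (cstar d * d) h)) + Re (cinner (\<Phi> (x * d) h) k)
      - Re (cinner V w) + Re (cinner k (\<Phi> (x * d) h)) + Re (cinner k (\<Phi> (x * cstar x) k))"
    by (simp add: numeral_3_eq_3 ucp_map_unital[OF u] cstar_cstar adj_d adj_x adj_xd
        cinner_left.minus cinner_right.minus P_def[symmetric] V_def[symmetric])
  moreover have "Re (cinner w P) + Re (cinner w V) = (norm w)\<^sup>2"
    using Re_cinner_self[of w] by (simp only: w_def cinner_right.add plus_complex.sel)
  moreover have "Re (cinner P w) + Re (cinner V w) = (norm w)\<^sup>2"
    using Re_cinner_self[of w] by (simp only: w_def cinner_left.add plus_complex.sel)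
  moreover have "Re (cinner P V) = Re (cinner k (\<Phi> x P))"
    using ucp_adjoint[OF u, of P x k] cinner_commute[of k "\<Phi> x P"] by (simp add: V_def)
  moreover have "Re (cinner k (\<Phi> (x * cstar x) k)) \<le> (norm x)\<^sup>2 * (norm k)\<^sup>2"
    using ucp_norm_le[OF u, of k "cstar x"] by (simp add: norm_cstar cstar_cstar)
  moreover have "Re (cinner (\<Phi> (x * d) h) k) = Re (cinner k (\<Phi> (x * d) h))"
    using cinner_commute[of k "\<Phi> (x * d) h"] by simp
  moreover have "(norm w)\<^sup>2 = (norm P)\<^sup>2 + 2 * Re (cinner P V) + (norm V)\<^sup>2"
    unfolding w_def by (rule power2_norm_add)
  moreover have "Re (cinner k (\<Phi> (x * d) h - \<Phi> x P)) = Re (cinner k (\<Phi> (x * d) h)) - Re (cinner k (\<Phi> x P))"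
    by (simp add: cinner_right.diff)
  ultimately show ?thesis
    unfolding P_def[symmetric] using Re_cinner_self[of w] zero_le_power2[of "norm V"] by linarith
qed

text \<open>Choi's inequality, obtained by taking \<open>k = - \<parallel>x\<parallel>\<^sup>-\<^sup>2 (\<Phi>(x d) h - \<Phi>(x) \<Phi>(d) h)\<close> above.\<close>

lemma ucp_multiplicative_defect:
  fixes \<Phi> :: "'a::cstar_algebra \<Rightarrow> 'h::chilbert \<Rightarrow> 'h"
  assumes u: "ucp_map \<Phi>"
  shows "(norm (\<Phi> (x * d) h - \<Phi> x (\<Phi> d h)))\<^sup>2
    \<le> (norm x)\<^sup>2 * (Re (cinner h (\<Phi> (cstar d * d) h)) - (norm (\<Phi> d h))\<^sup>2)"
proof (cases "x = 0")
  case True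
  thus ?thesis by (simp add: additive.zero[OF linear_map_BH_additive[OF ucp_map_linear[OF u]]])
next
  case False
  define w where "w = \<Phi> (x * d) h - \<Phi> x (\<Phi> d h)"
  define D where "D = Re (cinner h (\<Phi> (cstar d * d) h)) - (norm (\<Phi> d h))\<^sup>2"
  define t where "t = 1 / (norm x)\<^sup>2"
  have t: "t > 0" "(norm x)\<^sup>2 * t = 1" using False by (simp_all add: t_def)
  have "0 \<le> D + 2 * Re (cinner ((- t) *\<^sub>R w) w) + (norm x)\<^sup>2 * (norm ((- t) *\<^sub>R w))\<^sup>2"
    using ucp_defect_form_nonneg[OF u, of h d "(- t) *\<^sub>R w" x] by (simp add: D_def w_def)
  moreover have "Re (cinner ((- t) *\<^sub>R w) w) = - t * (norm w)\<^sup>2"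
    by (simp add: chilbert_scaleR_scaleC cinner_scaleC_left Re_cinner_self)
  moreover have "(norm x)\<^sup>2 * (norm ((- t) *\<^sub>R w))\<^sup>2 = t * (norm w)\<^sup>2"
    using t by (simp add: power_mult_distrib power2_eq_square mult.assoc[symmetric])
  ultimately have "t * (norm w)\<^sup>2 \<le> D" by simp
  hence "(norm x)\<^sup>2 * (t * (norm w)\<^sup>2) \<le> (norm x)\<^sup>2 * D" by (simp add: mult_left_mono)
  thus ?thesis using t by (simp add: w_def D_def mult.assoc[symmetric])
qed

lemma unital_star_rep_mult: "unital_star_rep \<pi> \<Longrightarrow> \<pi> (a * b) h = \<pi> a (\<pi> b h)"
  by (simp add: unital_star_rep_def)

lemma unital_star_rep_adjoint:
  assumes "unital_star_rep \<pi>"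
  shows "cinner k (\<pi> (cstar a) h) = cinner (\<pi> a k) h"
proof -
  have "cinner k (\<pi> (cstar a) h) = cnj (cinner (\<pi> (cstar a) h) k)"
    by (rule cinner_commute)
  also have "\<dots> = cnj (cinner h (\<pi> a k))"
    using assms by (simp add: unital_star_rep_def)
  finally show ?thesis by (simp add: cinner_commute[of "\<pi> a k" h])
qed

lemma unital_star_rep_ucp_map:
  fixes \<pi> :: "'a::cstar_algebra \<Rightarrow> 'h::chilbert \<Rightarrow> 'h"
  assumes r: "unital_star_rep \<pi>"
  shows "ucp_map \<pi>"
  unfolding ucp_map_def completely_positive_def Let_def
proof (intro conjI allI)
  show lin: "linear_map_BH \<pi>" and "\<pi> 1 h = h" for h
    using r by (simp_all add: unital_star_rep_def)
  interpret additive "\<lambda>a. \<pi> a h" for h by (rule linear_map_BH_additive[OF lin])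
  fix n :: nat and Y :: "nat \<Rightarrow> nat \<Rightarrow> 'a" and h :: "nat \<Rightarrow> 'h"
  define u where "u k = (\<Sum>j<n. \<pi> (Y k j) (h j))" for k
  have "cinner (h i) (\<pi> (\<Sum>k<n. cstar (Y k i) * Y k j) (h j))
      = (\<Sum>k<n. cinner (\<pi> (Y k i) (h i)) (\<pi> (Y k j) (h j)))" for i j
    using r by (simp add: sum cinner_right.sum unital_star_rep_mult unital_star_rep_adjoint)
  hence "(\<Sum>i<n. \<Sum>j<n. cinner (h i) (\<pi> (\<Sum>k<n. cstar (Y k i) * Y k j) (h j)))
      = (\<Sum>i<n. \<Sum>j<n. \<Sum>k<n. cinner (\<pi> (Y k i) (h i)) (\<pi> (Y k j) (h j)))"
    by simp
  also have "\<dots> = (\<Sum>i<n. \<Sum>k<n. \<Sum>j<n. cinner (\<pi> (Y k i) (h i)) (\<pi> (Y k j) (h j)))"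
    by (intro sum.cong refl sum.swap)
  also have "\<dots> = (\<Sum>k<n. \<Sum>i<n. \<Sum>j<n. cinner (\<pi> (Y k i) (h i)) (\<pi> (Y k j) (h j)))"
    by (rule sum.swap)
  also have "\<dots> = (\<Sum>k<n. cinner (u k) (u k))"
    by (simp only: u_def cinner_left.sum) (simp only: cinner_right.sum)
  also have "\<dots> = complex_of_real (\<Sum>k<n. (norm (u k))\<^sup>2)"
    by (simp add: cinner_self)
  finally show "Im (\<Sum>i<n. \<Sum>j<n. cinner (h i) (\<pi> (\<Sum>k<n. cstar (Y k i) * Y k j) (h j))) = 0"
    and "0 \<le> Re (\<Sum>i<n. \<Sum>j<n. cinner (h i) (\<pi> (\<Sum>k<n. cstar (Y k i) * Y k j) (h j)))"
    by (simp_all add: sum_nonneg)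
qed

lemma unital_star_rep_compression_le:
  fixes \<pi> :: "'a::cstar_algebra \<Rightarrow> 'h::chilbert \<Rightarrow> 'h"
  assumes r: "unital_star_rep \<pi>" and g: "norm g \<le> 1" and h: "norm h \<le> 1"
  shows "cmod (cinner (\<pi> n g) (\<pi> c (\<pi> n h))) \<le> norm (cstar n * c * n)"
proof -
  have "cinner (\<pi> n g) (\<pi> c (\<pi> n h)) = cinner g (\<pi> (cstar n * c * n) h)"
    by (simp add: unital_star_rep_adjoint[OF r] unital_star_rep_mult[OF r])
  also have "cmod \<dots> \<le> norm g * (norm (cstar n * c * n) * norm h)"
    using norm_cinner_le ucp_contractive[OF unital_star_rep_ucp_map[OF r]]
    by (metis mult_left_mono norm_ge_zero order_trans)
  also have "\<dots> \<le> norm g * norm (cstar n * c * n)"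
    by (rule mult_left_mono[OF mult_left_le[OF h norm_ge_zero] norm_ge_zero])
  also have "\<dots> \<le> norm (cstar n * c * n)"
    by (rule mult_left_le_one_le[OF norm_ge_zero norm_ge_zero g])
  finally show ?thesis .
qed

section \<open>Almost fixed vectors\<close>

lemma ucp_almost_fixed_vector:
  fixes \<Phi> \<pi> :: "'a::cstar_algebra \<Rightarrow> 'h::chilbert \<Rightarrow> 'h"
  assumes u: "ucp_map \<Phi>" and r: "unital_star_rep \<pi>" and eq: "\<And>h. \<Phi> m h = \<pi> m h"
    and m: "norm m \<le> 1" and \<delta>: "2 * Re (cinner k (k - \<pi> m k)) \<le> \<delta>"
  shows "norm (k - \<pi> m k) \<le> sqrt \<delta>"
    and "norm (\<Phi> (x * m) k - \<Phi> x (\<pi> m k)) \<le> norm x * sqrt \<delta>"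
proof -
  have "norm (\<pi> m k) \<le> norm k"
    using ucp_contractive[OF unital_star_rep_ucp_map[OF r], of m k] m
    by (metis mult_left_le_one_le norm_ge_zero order_trans)
  hence \<pi>_le: "(norm (\<pi> m k))\<^sup>2 \<le> (norm k)\<^sup>2" by (simp add: power_mono)
  have defect: "2 * Re (cinner k (k - \<pi> m k)) = 2 * (norm k)\<^sup>2 - 2 * Re (cinner k (\<pi> m k))"
    by (simp add: cinner_right.diff Re_cinner_self)
  have diff_le: "(norm (k - \<pi> m k))\<^sup>2 \<le> \<delta>"
    using power2_norm_diff[of k "\<pi> m k"] defect \<pi>_le \<delta> by linarith
  thus "norm (k - \<pi> m k) \<le> sqrt \<delta>"
    by (rule real_le_rsqrt)
  have \<delta>_nonneg: "0 \<le> \<delta>"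
    using order_trans[OF zero_le_power2 diff_le] .
  have "(norm m)\<^sup>2 * (norm k)\<^sup>2 \<le> (norm k)\<^sup>2"
    by (rule mult_left_le_one_le) (simp_all add: m power_le_one)
  hence "Re (cinner k (\<Phi> (cstar m * m) k)) \<le> (norm k)\<^sup>2"
    using ucp_norm_le[OF u, of k m] by linarith
  hence "Re (cinner k (\<Phi> (cstar m * m) k)) - (norm (\<Phi> m k))\<^sup>2 \<le> \<delta>"
    using power2_norm_diff[of k "\<pi> m k"] defect \<delta> zero_le_power2[of "norm (k - \<pi> m k)"]
    unfolding eq by linarith
  hence "(norm (\<Phi> (x * m) k - \<Phi> x (\<pi> m k)))\<^sup>2 \<le> (norm x)\<^sup>2 * \<delta>"
    using ucp_multiplicative_defect[OF u, of x m k] unfolding eq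
    by (meson mult_left_mono order_trans zero_le_power2)
  also have "\<dots> = (norm x * sqrt \<delta>)\<^sup>2"
    using \<delta>_nonneg by (simp add: power_mult_distrib)
  finally show "norm (\<Phi> (x * m) k - \<Phi> x (\<pi> m k)) \<le> norm x * sqrt \<delta>"
    by (rule power2_le_imp_le) (simp add: \<delta>_nonneg)
qed

lemma compressed_vector_defect_le:
  fixes \<pi> :: "'a::cstar_algebra \<Rightarrow> 'h::chilbert \<Rightarrow> 'h"
  assumes r: "unital_star_rep \<pi>" and h: "norm h \<le> 1"
  shows "2 * Re (cinner (\<pi> n h) (\<pi> n h - \<pi> m (\<pi> n h))) \<le> 2 * norm (cstar n * (1 - m) * n)"
proof -
  interpret additive "\<lambda>a. \<pi> a k" for k
    by (rule linear_map_BH_additive[OF ucp_map_linear[OF unital_star_rep_ucp_map[OF r]]])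
  have "\<pi> n h - \<pi> m (\<pi> n h) = \<pi> (1 - m) (\<pi> n h)"
    by (simp add: diff ucp_map_unital[OF unital_star_rep_ucp_map[OF r]])
  hence "Re (cinner (\<pi> n h) (\<pi> n h - \<pi> m (\<pi> n h))) \<le> cmod (cinner (\<pi> n h) (\<pi> (1 - m) (\<pi> n h)))"
    by (simp add: complex_Re_le_cmod)
  also have "\<dots> \<le> norm (cstar n * (1 - m) * n)"
    by (rule unital_star_rep_compression_le[OF r h h])
  finally show ?thesis by simp
qed

lemma ucp_almost_fixed_mult_le:
  fixes \<Phi> \<pi> :: "'a::cstar_algebra \<Rightarrow> 'h::chilbert \<Rightarrow> 'h"
  assumes u: "ucp_map \<Phi>" and r: "unital_star_rep \<pi>" and eq: "\<And>h. \<Phi> m h = \<pi> m h"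
    and m: "norm m \<le> 1" and \<delta>: "2 * Re (cinner k (k - \<pi> m k)) \<le> \<delta>"
  shows "norm (\<Phi> b k - \<Phi> (b * m) k) \<le> 2 * (norm b * sqrt \<delta>)"
proof -
  note fixed = ucp_almost_fixed_vector[OF u r eq m \<delta>]
  have "\<Phi> b k - \<Phi> (b * m) k = \<Phi> b (k - \<pi> m k) - (\<Phi> (b * m) k - \<Phi> b (\<pi> m k))"
    by (simp add: additive.diff[OF bounded_op_additive[OF linear_map_BH_bounded_op[OF ucp_map_linear[OF u]]]])
  also have "norm \<dots> \<le> norm b * norm (k - \<pi> m k) + norm b * sqrt \<delta>"
    using norm_triangle_ineq4 ucp_contractive[OF u] fixed(2)[of b] by (smt (verit))
  also have "\<dots> \<le> 2 * (norm b * sqrt \<delta>)"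
    using mult_left_mono[OF fixed(1) norm_ge_zero[of b]] by linarith
  finally show ?thesis .
qed

text \<open>\<open>\<Phi>(m\<^sup>* b m)\<close> is reached from \<open>\<Phi>(b)\<close> by moving \<open>m\<close> across \<open>k\<close> and, after taking adjoints,
  \<open>m\<^sup>*\<close> across \<open>g\<close>.\<close>

lemma ucp_compression_comparison:
  fixes \<Phi> \<pi> :: "'a::cstar_algebra \<Rightarrow> 'h::chilbert \<Rightarrow> 'h"
  assumes u: "ucp_map \<Phi>" and r: "unital_star_rep \<pi>" and eq: "\<And>h. \<Phi> m h = \<pi> m h"
    and m: "norm m \<le> 1" and g: "norm g \<le> 1" and k: "norm k \<le> 1"
    and \<delta>g: "2 * Re (cinner g (g - \<pi> m g)) \<le> \<delta>" and \<delta>k: "2 * Re (cinner k (k - \<pi> m k)) \<le> \<delta>"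
  shows "cmod (cinner g (\<Phi> b k) - cinner g (\<Phi> (cstar m * b * m) k)) \<le> 4 * (norm b * sqrt \<delta>)"
proof -
  have cinner_le: "cmod (cinner v w) \<le> norm w" if "norm v \<le> 1" for v w :: 'h
    using norm_cinner_le[of v w] mult_right_mono[OF that norm_ge_zero[of w]] by simp
  have "norm (cstar (b * m)) \<le> norm b"
    using norm_mult_ineq[of b m] mult_left_mono[OF m norm_ge_zero[of b]] by (simp add: norm_cstar)
  hence "norm (\<Phi> (cstar (b * m)) g - \<Phi> (cstar (b * m) * m) g) \<le> 2 * (norm b * sqrt \<delta>)"
    using ucp_almost_fixed_mult_le[OF u r eq m \<delta>g, of "cstar (b * m)"]
      ucp_almost_fixed_vector(1)[OF u r eq m \<delta>g]
    by (smt (verit) mult_right_mono norm_ge_zero)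
  moreover have "cinner g (\<Phi> (b * m) k) - cinner g (\<Phi> (cstar m * b * m) k)
      = cinner (\<Phi> (cstar (b * m)) g - \<Phi> (cstar (b * m) * m) g) k"
    using ucp_adjoint[OF u, of g "cstar (b * m)" k] ucp_adjoint[OF u, of g "cstar (b * m) * m" k]
    by (simp add: cinner_left.diff cstar_mult cstar_cstar mult.assoc)
  moreover have "cinner g (\<Phi> b k) - cinner g (\<Phi> (b * m) k) = cinner g (\<Phi> b k - \<Phi> (b * m) k)"
    by (simp add: cinner_right.diff)
  moreover have "cmod (cinner (\<Phi> (cstar (b * m)) g - \<Phi> (cstar (b * m) * m) g) k)
      \<le> norm (\<Phi> (cstar (b * m)) g - \<Phi> (cstar (b * m) * m) g)"
    using cinner_le[OF k] cinner_commute[of k] by (metis complex_mod_cnj)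
  ultimately show ?thesis
    using cinner_le[OF g, of "\<Phi> b k - \<Phi> (b * m) k"] ucp_almost_fixed_mult_le[OF u r eq m \<delta>k, of b]
      norm_diff_triangle_le[of "cinner g (\<Phi> b k)" "cinner g (\<Phi> (b * m) k)"]
    by (smt (verit))
qed

lemma compressed_difference_le:
  fixes \<Phi> \<pi> :: "'a::cstar_algebra \<Rightarrow> 'h::chilbert \<Rightarrow> 'h"
  assumes u: "ucp_map \<Phi>" and r: "unital_star_rep \<pi>" and eq: "\<And>h. \<Phi> m h = \<pi> m h"
    and m: "norm m \<le> 1" and n: "norm n \<le> 1" and g: "norm g \<le> 1" and h: "norm h \<le> 1"
  shows "cmod (cinner g (\<pi> (cstar n) (\<Phi> b (\<pi> n h) - \<pi> b (\<pi> n h))))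
    \<le> 4 * (norm b * sqrt (2 * norm (cstar n * (1 - m) * n))) + norm (cstar m * b * m) + norm (cstar n * b * n)"
proof -
  have contraction: "norm (\<pi> n v) \<le> 1" if "norm v \<le> 1" for v
    using ucp_contractive[OF unital_star_rep_ucp_map[OF r], of n v] mult_le_one[OF n norm_ge_zero that]
    by linarith
  define A where "A = cinner (\<pi> n g) (\<Phi> b (\<pi> n h)) - cinner (\<pi> n g) (\<Phi> (cstar m * b * m) (\<pi> n h))"
  define B where "B = cinner (\<pi> n g) (\<Phi> (cstar m * b * m) (\<pi> n h))"
  define C where "C = cinner (\<pi> n g) (\<pi> b (\<pi> n h))"
  have "cmod A \<le> 4 * (norm b * sqrt (2 * norm (cstar n * (1 - m) * n)))"
    unfolding A_def using contraction g h compressed_vector_defect_le[OF r]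
    by (intro ucp_compression_comparison[OF u r eq m]) auto
  moreover have "cmod B \<le> norm (cstar m * b * m)"
  proof -
    have "cmod B \<le> norm (\<Phi> (cstar m * b * m) (\<pi> n h))"
      unfolding B_def using norm_cinner_le mult_left_le_one_le contraction[OF g]
      by (meson norm_ge_zero order_trans)
    also have "\<dots> \<le> norm (cstar m * b * m)"
      using ucp_contractive[OF u] contraction[OF h] by (meson mult_left_le norm_ge_zero order_trans)
    finally show ?thesis .
  qed
  moreover have "cmod C \<le> norm (cstar n * b * n)"
    unfolding C_def by (rule unital_star_rep_compression_le[OF r g h])
  moreover have "cinner g (\<pi> (cstar n) (\<Phi> b (\<pi> n h) - \<pi> b (\<pi> n h))) = A + B - C"
    by (simp add: A_def B_def C_def unital_star_rep_adjoint[OF r] cinner_right.diff)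
  hence "cmod (cinner g (\<pi> (cstar n) (\<Phi> b (\<pi> n h) - \<pi> b (\<pi> n h)))) \<le> cmod A + cmod B + cmod C"
    using norm_triangle_ineq4[of "A + B" C] norm_triangle_ineq[of A B] by simp
  ultimately show ?thesis by linarith
qed

lemma state_sandwich_le:
  assumes "is_state (\<psi> :: 'a::cstar_algebra \<Rightarrow> complex)"
  shows "Re (\<psi> (cstar (x * b) * (x * b))) \<le> (norm x)\<^sup>2 * Re (\<psi> (cstar b * b))"
  using assms by (intro positive_functional_sandwich_le) (simp_all add: is_state_def)

lemma sqrt_state_le_gns_norm:
  assumes st: "is_state (\<psi> :: 'a::cstar_algebra \<Rightarrow> complex)"
  shows "sqrt (Re (\<psi> (cstar x * x))) \<le> gns_norm \<psi> x"
  unfolding gns_norm_def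
proof (rule cSUP_upper2[where x=1])
  show "bdd_above ((\<lambda>b. sqrt (Re (\<psi> (cstar (x * b) * (x * b))))) ` {b. Re (\<psi> (cstar b * b)) \<le> 1})"
  proof (rule bdd_aboveI[of _ "norm x"], clarify)
    fix b assume "Re (\<psi> (cstar b * b)) \<le> 1"
    hence "Re (\<psi> (cstar (x * b) * (x * b))) \<le> (norm x)\<^sup>2"
      using state_sandwich_le[OF st, of x b] mult_left_mono[of _ 1 "(norm x)\<^sup>2"] by fastforce
    thus "sqrt (Re (\<psi> (cstar (x * b) * (x * b)))) \<le> norm x"
      using real_sqrt_le_mono by fastforce
  qed
qed (use st in \<open>simp_all add: is_state_def\<close>)

lemma characteristic_sequence_eventually_less:
  assumes "characteristic_sequence \<psi> \<Delta>" and "cmod (\<psi> a) < c"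
  shows "\<forall>\<^sub>F n in sequentially. norm (cstar (\<Delta> n) * a * \<Delta> n) < c"
proof -
  have "limsup (\<lambda>n. ereal (norm (cstar (\<Delta> n) * a * \<Delta> n))) < ereal c"
    using assms by (auto simp: characteristic_sequence_def intro: le_less_trans)
  thus ?thesis by (auto dest: Limsup_lessD)
qed

lemma limsup_le_if_eventually_le:
  fixes f :: "nat \<Rightarrow> real"
  assumes "\<And>e. e > 0 \<Longrightarrow> \<forall>\<^sub>F n in sequentially. f n \<le> L + e"
  shows "limsup (\<lambda>n. ereal (f n)) \<le> ereal L"
proof (rule ereal_le_epsilon2)
  fix e :: real assume "e > 0"
  thus "limsup (\<lambda>n. ereal (f n)) \<le> ereal L + ereal e"
    using assms by (intro Limsup_bounded) (auto elim: eventually_mono)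
qed

section \<open>Compressions along a characteristic sequence\<close>

lemma characteristic_sequence_anchor:
  assumes st: "is_state \<psi>" and ch: "characteristic_sequence \<psi> \<Delta>" and \<psi>_b: "\<psi> b = 0"
    and \<delta>: "\<delta> > 0" and e: "e > 0"
  obtains m where "norm (cstar (\<Delta> m) * b * \<Delta> m) < e"
    and "\<forall>\<^sub>F n in sequentially. norm (cstar (\<Delta> n) * (1 - \<Delta> m) * \<Delta> n) < \<delta>
      \<and> norm (cstar (\<Delta> n) * b * \<Delta> n) < e"
proof -
  interpret \<psi>: additive \<psi> by unfold_locales (use st in \<open>simp add: is_state_def\<close>)
  have "\<forall>\<^sub>F m in sequentially. dist (\<psi> (\<Delta> m)) 1 < \<delta>"
    using ch \<delta> by (simp add: characteristic_sequence_def tendstoD)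
  hence "\<forall>\<^sub>F m in sequentially. cmod (\<psi> (1 - \<Delta> m)) < \<delta>"
    using st by (simp add: \<psi>.diff is_state_def dist_norm norm_minus_commute)
  moreover have "\<forall>\<^sub>F m in sequentially. norm (cstar (\<Delta> m) * b * \<Delta> m) < e"
    using ch e \<psi>_b by (intro characteristic_sequence_eventually_less) auto
  ultimately obtain m where m: "cmod (\<psi> (1 - \<Delta> m)) < \<delta>" "norm (cstar (\<Delta> m) * b * \<Delta> m) < e"
    by (auto dest: eventually_happens[OF eventually_conj])
  moreover have "\<forall>\<^sub>F n in sequentially. norm (cstar (\<Delta> n) * (1 - \<Delta> m) * \<Delta> n) < \<delta>
      \<and> norm (cstar (\<Delta> n) * b * \<Delta> n) < e"
    using ch m(1) e \<psi>_b by (intro eventually_conj characteristic_sequence_eventually_less) auto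
  ultimately show ?thesis using that by blast
qed

lemma compressed_difference_eventually_small_centred:
  fixes \<pi> \<Phi> :: "'a::cstar_algebra \<Rightarrow> 'h::chilbert \<Rightarrow> 'h"
  assumes r: "unital_star_rep \<pi>" and u: "ucp_map \<Phi>" and eqS: "\<forall>s\<in>S. \<Phi> s = \<pi> s"
    and st: "is_state \<psi>" and ch: "characteristic_sequence \<psi> \<Delta>" and inS: "\<forall>n. \<Delta> n \<in> S"
    and \<psi>_b: "\<psi> b = 0" and e: "e > 0"
  shows "\<forall>\<^sub>F n in sequentially. \<forall>h. norm h \<le> 1 \<longrightarrow>
    norm (\<pi> (cstar (\<Delta> n)) (\<Phi> b (\<pi> (\<Delta> n) h) - \<pi> b (\<pi> (\<Delta> n) h))) \<le> e"
proof -
  have norm_\<Delta>: "norm (\<Delta> n) = 1" for n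
    using ch by (simp add: characteristic_sequence_def)
  define q where "q = e / (12 * (norm b + 1))"
  have b1: "norm b + 1 > 0" using norm_ge_zero[of b] by linarith
  have q: "q > 0" using e b1 by (simp add: q_def)
  have "4 * (norm b * q) \<le> 4 * ((norm b + 1) * q)" using q by simp
  also have "\<dots> = e / 3" using b1 by (simp add: q_def field_simps)
  finally have bq: "4 * (norm b * q) \<le> e / 3" .
  obtain m where m: "norm (cstar (\<Delta> m) * b * \<Delta> m) < e / 3"
    and ev: "\<forall>\<^sub>F n in sequentially. norm (cstar (\<Delta> n) * (1 - \<Delta> m) * \<Delta> n) < q\<^sup>2 / 2
      \<and> norm (cstar (\<Delta> n) * b * \<Delta> n) < e / 3"
    using characteristic_sequence_anchor[OF st ch \<psi>_b, of "q\<^sup>2 / 2" "e / 3"] q e by auto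
  show ?thesis
    using ev
  proof (rule eventually_mono, intro allI impI)
    fix n and h :: 'h
    assume n: "norm (cstar (\<Delta> n) * (1 - \<Delta> m) * \<Delta> n) < q\<^sup>2 / 2 \<and> norm (cstar (\<Delta> n) * b * \<Delta> n) < e / 3"
      and h: "norm h \<le> 1"
    have "sqrt (2 * norm (cstar (\<Delta> n) * (1 - \<Delta> m) * \<Delta> n)) \<le> q"
      using n q by (simp add: real_le_lsqrt)
    hence "4 * (norm b * sqrt (2 * norm (cstar (\<Delta> n) * (1 - \<Delta> m) * \<Delta> n))) \<le> e / 3"
      using bq by (smt (verit) mult_left_mono norm_ge_zero)
    hence "cmod (cinner g (\<pi> (cstar (\<Delta> n)) (\<Phi> b (\<pi> (\<Delta> n) h) - \<pi> b (\<pi> (\<Delta> n) h)))) \<le> e"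
      if "norm g \<le> 1" for g
      using compressed_difference_le[OF u r _ _ _ that h, of "\<Delta> m" "\<Delta> n" b] eqS inS norm_\<Delta> n m
      by fastforce
    thus "norm (\<pi> (cstar (\<Delta> n)) (\<Phi> b (\<pi> (\<Delta> n) h) - \<pi> b (\<pi> (\<Delta> n) h))) \<le> e"
      by (rule norm_le_if_cinner_le)
  qed
qed

lemma compressed_difference_eventually_small:
  fixes \<pi> \<Phi> :: "'a::cstar_algebra \<Rightarrow> 'h::chilbert \<Rightarrow> 'h"
  assumes r: "unital_star_rep \<pi>" and u: "ucp_map \<Phi>" and eqS: "\<forall>s\<in>S. \<Phi> s = \<pi> s"
    and st: "is_state \<psi>" and ch: "characteristic_sequence \<psi> \<Delta>" and inS: "\<forall>n. \<Delta> n \<in> S"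
    and e: "e > 0"
  shows "\<forall>\<^sub>F n in sequentially. \<forall>h. norm h \<le> 1 \<longrightarrow>
    norm (\<pi> (cstar (\<Delta> n)) (\<Phi> a (\<pi> (\<Delta> n) h) - \<pi> a (\<pi> (\<Delta> n) h))) \<le> e"
proof -
  interpret \<psi>: additive \<psi> by unfold_locales (use st in \<open>simp add: is_state_def\<close>)
  interpret \<Phi>: additive "\<lambda>a. \<Phi> a h" for h by (rule linear_map_BH_additive[OF ucp_map_linear[OF u]])
  interpret \<pi>: additive "\<lambda>a. \<pi> a h" for h
    by (rule linear_map_BH_additive[OF ucp_map_linear[OF unital_star_rep_ucp_map[OF r]]])
  define b where "b = a - \<psi> a *\<^sub>C 1"
  have "\<psi> b = 0"
    using st by (simp add: b_def \<psi>.diff is_state_def)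
  moreover have "\<Phi> b k - \<pi> b k = \<Phi> a k - \<pi> a k" for k
    by (simp add: b_def \<Phi>.diff \<pi>.diff linear_map_BH_scaleC[OF ucp_map_linear[OF u]]
        linear_map_BH_scaleC[OF ucp_map_linear[OF unital_star_rep_ucp_map[OF r]]]
        ucp_map_unital[OF u] ucp_map_unital[OF unital_star_rep_ucp_map[OF r]])
  ultimately show ?thesis
    using compressed_difference_eventually_small_centred[OF r u eqS st ch inS _ e, of b] by simp
qed

lemma unital_star_rep_norm_compressed_le:
  fixes \<pi> :: "'a::cstar_algebra \<Rightarrow> 'h::chilbert \<Rightarrow> 'h"
  assumes r: "unital_star_rep \<pi>" and h: "norm h \<le> 1"
  shows "norm (\<pi> x (\<pi> d h)) \<le> sqrt (norm (cstar d * (cstar x * x) * d))"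
proof -
  have "norm (\<pi> x (\<pi> d h)) = norm (\<pi> (x * d) h)"
    by (simp add: unital_star_rep_mult[OF r])
  also have "\<dots> \<le> norm (x * d) * norm h"
    by (rule ucp_contractive[OF unital_star_rep_ucp_map[OF r]])
  also have "\<dots> \<le> norm (x * d)"
    by (rule mult_left_le[OF h norm_ge_zero])
  also have "(norm (x * d))\<^sup>2 = norm (cstar d * (cstar x * x) * d)"
    using cstar_identity[of "x * d"] by (simp add: cstar_mult mult.assoc)
  hence "norm (x * d) = sqrt (norm (cstar d * (cstar x * x) * d))"
    by (simp add: real_sqrt_unique[symmetric])
  finally show ?thesis .
qed

lemma compressed_vector_difference_le:
  fixes \<pi> \<Phi> :: "'a::cstar_algebra \<Rightarrow> 'h::chilbert \<Rightarrow> 'h"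
  assumes r: "unital_star_rep \<pi>" and u: "ucp_map \<Phi>" and h: "norm h \<le> 1"
    and small: "norm (\<pi> (cstar d) (\<Phi> (cstar x * x) (\<pi> d h) - \<pi> (cstar x * x) (\<pi> d h))) \<le> \<epsilon>"
  shows "norm (\<Phi> x (\<pi> d h) - \<pi> x (\<pi> d h))
    \<le> sqrt (norm (cstar d * (cstar x * x) * d) + \<epsilon>) + sqrt (norm (cstar d * (cstar x * x) * d))"
proof -
  define k where "k = \<pi> d h"
  define N where "N = norm (cstar d * (cstar x * x) * d)"
  have \<pi>_x: "norm (\<pi> x k) \<le> sqrt N"
    unfolding k_def N_def by (rule unital_star_rep_norm_compressed_le[OF r h])
  have "(norm (\<Phi> x k))\<^sup>2 \<le> Re (cinner k (\<Phi> (cstar x * x) k - \<pi> (cstar x * x) k)) + Re (cinner k (\<pi> (cstar x * x) k))"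
    using ucp_Kadison_Schwarz[OF u, of x k] by (simp add: cinner_right.diff)
  moreover have "Re (cinner k (\<Phi> (cstar x * x) k - \<pi> (cstar x * x) k)) \<le> \<epsilon>"
  proof -
    have "cinner k (\<Phi> (cstar x * x) k - \<pi> (cstar x * x) k)
        = cinner h (\<pi> (cstar d) (\<Phi> (cstar x * x) k - \<pi> (cstar x * x) k))"
      by (simp add: k_def unital_star_rep_adjoint[OF r])
    hence "Re (cinner k (\<Phi> (cstar x * x) k - \<pi> (cstar x * x) k))
        \<le> norm h * norm (\<pi> (cstar d) (\<Phi> (cstar x * x) k - \<pi> (cstar x * x) k))"
      using complex_Re_le_cmod norm_cinner_le order_trans by metis
    also have "\<dots> \<le> \<epsilon>"
      using small h unfolding k_def by (meson mult_left_le_one_le norm_ge_zero order_trans)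
    finally show ?thesis .
  qed
  moreover have "Re (cinner k (\<pi> (cstar x * x) k)) = (norm (\<pi> x k))\<^sup>2"
    by (simp add: unital_star_rep_mult[OF r] unital_star_rep_adjoint[OF r] Re_cinner_self)
  moreover have "(norm (\<pi> x k))\<^sup>2 \<le> N"
    using power_mono[OF \<pi>_x norm_ge_zero, of 2] by (simp add: N_def)
  ultimately have "norm (\<Phi> x k) \<le> sqrt (\<epsilon> + N)"
    by (intro real_le_rsqrt) linarith
  thus ?thesis
    using \<pi>_x norm_triangle_ineq4[of "\<Phi> x k" "\<pi> x k"] by (simp add: k_def N_def add.commute)
qed

lemma limsup_compressed_difference_le:
  fixes \<pi> \<Phi> :: "'a::cstar_algebra \<Rightarrow> 'h::chilbert \<Rightarrow> 'h"
  assumes r: "unital_star_rep \<pi>" and u: "ucp_map \<Phi>" and eqS: "\<forall>s\<in>S. \<Phi> s = \<pi> s"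
    and st: "is_state \<psi>" and ch: "characteristic_sequence \<psi> \<Delta>" and inS: "\<forall>n. \<Delta> n \<in> S"
    and s: "s \<in> S"
  shows "limsup (\<lambda>n. ereal (opnorm (\<lambda>h. \<Phi> a (\<pi> (\<Delta> n) h) - \<pi> a (\<pi> (\<Delta> n) h))))
    \<le> ereal (2 * sqrt (Re (\<psi> (cstar (a - s) * (a - s)))))"
proof (rule limsup_le_if_eventually_le)
  fix e :: real assume e: "e > 0"
  define x where "x = a - s"
  define R where "R = Re (\<psi> (cstar x * x))"
  have R: "R \<ge> 0" "cmod (\<psi> (cstar x * x)) = R"
    using st by (auto simp: R_def is_state_def cmod_eq_Re)
  define \<epsilon> where "\<epsilon> = e\<^sup>2 / 8"
  have \<epsilon>: "\<epsilon> > 0" "sqrt (2 * \<epsilon>) = e / 2"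
    using e by (simp_all add: \<epsilon>_def real_sqrt_divide power_divide)
  have same_difference: "\<Phi> a k - \<pi> a k = \<Phi> x k - \<pi> x k" for k
    using eqS s linear_map_BH_additive[OF ucp_map_linear[OF u], THEN additive.add, of x s k]
      linear_map_BH_additive[OF ucp_map_linear[OF unital_star_rep_ucp_map[OF r]], THEN additive.add, of x s k]
    by (simp add: x_def)
  have "\<forall>\<^sub>F n in sequentially. (\<forall>h. norm h \<le> 1 \<longrightarrow>
      norm (\<pi> (cstar (\<Delta> n)) (\<Phi> (cstar x * x) (\<pi> (\<Delta> n) h) - \<pi> (cstar x * x) (\<pi> (\<Delta> n) h))) \<le> \<epsilon>)
      \<and> norm (cstar (\<Delta> n) * (cstar x * x) * \<Delta> n) < R + \<epsilon>"
    using compressed_difference_eventually_small[OF r u eqS st ch inS \<epsilon>(1)]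
      characteristic_sequence_eventually_less[OF ch] R \<epsilon>(1)
    by (intro eventually_conj) auto
  thus "\<forall>\<^sub>F n in sequentially.
      opnorm (\<lambda>h. \<Phi> a (\<pi> (\<Delta> n) h) - \<pi> a (\<pi> (\<Delta> n) h)) \<le> 2 * sqrt (Re (\<psi> (cstar (a - s) * (a - s)))) + e"
  proof (rule eventually_mono, intro opnorm_le)
    fix n and h :: 'h
    assume n: "(\<forall>h. norm h \<le> 1 \<longrightarrow>
        norm (\<pi> (cstar (\<Delta> n)) (\<Phi> (cstar x * x) (\<pi> (\<Delta> n) h) - \<pi> (cstar x * x) (\<pi> (\<Delta> n) h))) \<le> \<epsilon>)
        \<and> norm (cstar (\<Delta> n) * (cstar x * x) * \<Delta> n) < R + \<epsilon>"
      and h: "norm h \<le> 1"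
    define N where "N = norm (cstar (\<Delta> n) * (cstar x * x) * \<Delta> n)"
    have N: "N < R + \<epsilon>" using n by (simp add: N_def)
    have "norm (\<Phi> a (\<pi> (\<Delta> n) h) - \<pi> a (\<pi> (\<Delta> n) h)) \<le> sqrt (N + \<epsilon>) + sqrt N"
      unfolding same_difference N_def using n h by (intro compressed_vector_difference_le[OF r u h]) auto
    also have "\<dots> \<le> sqrt (R + 2 * \<epsilon>) + sqrt (R + 2 * \<epsilon>)"
      using N \<epsilon>(1) by (intro add_mono[OF real_sqrt_le_mono real_sqrt_le_mono]) linarith+
    also have "\<dots> \<le> 2 * sqrt R + e"
      using sqrt_add_le_add_sqrt[OF R(1), of "2 * \<epsilon>"] \<epsilon> by simp
    finally show "norm (\<Phi> a (\<pi> (\<Delta> n) h) - \<pi> a (\<pi> (\<Delta> n) h)) \<le> 2 * sqrt (Re (\<psi> (cstar (a - s) * (a - s)))) + e"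
      by (simp add: R_def x_def)
  qed
qed

lemma compressed_difference_tendsto_zero:
  fixes \<pi> \<Phi> :: "'a::cstar_algebra \<Rightarrow> 'h::chilbert \<Rightarrow> 'h"
  assumes "unital_star_rep \<pi>" and "ucp_map \<Phi>" and "\<forall>s\<in>S. \<Phi> s = \<pi> s"
    and "is_state \<psi>" and "characteristic_sequence \<psi> \<Delta>" and "\<forall>n. \<Delta> n \<in> S"
  shows "(\<lambda>n. opnorm (\<lambda>h. \<pi> (cstar (\<Delta> n)) (\<Phi> a (\<pi> (\<Delta> n) h) - \<pi> a (\<pi> (\<Delta> n) h)))) \<longlonglongrightarrow> 0"
proof (rule tendstoI)
  fix e :: real assume "e > 0"
  hence "\<forall>\<^sub>F n in sequentially. \<forall>h. norm h \<le> 1 \<longrightarrow>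
      norm (\<pi> (cstar (\<Delta> n)) (\<Phi> a (\<pi> (\<Delta> n) h) - \<pi> a (\<pi> (\<Delta> n) h))) \<le> e / 2"
    using assms by (intro compressed_difference_eventually_small) auto
  thus "\<forall>\<^sub>F n in sequentially.
      dist (opnorm (\<lambda>h. \<pi> (cstar (\<Delta> n)) (\<Phi> a (\<pi> (\<Delta> n) h) - \<pi> a (\<pi> (\<Delta> n) h)))) 0 < e"
  proof (rule eventually_mono)
    fix n
    assume bound: "\<forall>h. norm h \<le> 1 \<longrightarrow>
      norm (\<pi> (cstar (\<Delta> n)) (\<Phi> a (\<pi> (\<Delta> n) h) - \<pi> a (\<pi> (\<Delta> n) h))) \<le> e / 2"
    have "opnorm (\<lambda>h. \<pi> (cstar (\<Delta> n)) (\<Phi> a (\<pi> (\<Delta> n) h) - \<pi> a (\<pi> (\<Delta> n) h))) \<le> e / 2"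
      by (rule opnorm_le) (use bound in blast)
    moreover have "0 \<le> opnorm (\<lambda>h. \<pi> (cstar (\<Delta> n)) (\<Phi> a (\<pi> (\<Delta> n) h) - \<pi> a (\<pi> (\<Delta> n) h)))"
      by (rule opnorm_nonneg) (use bound in blast)
    ultimately show "dist (opnorm (\<lambda>h. \<pi> (cstar (\<Delta> n)) (\<Phi> a (\<pi> (\<Delta> n) h) - \<pi> a (\<pi> (\<Delta> n) h)))) 0 < e"
      using \<open>e > 0\<close> by simp
  qed
qed

lemma le_twice_gns_dist:
  fixes L :: ereal
  assumes st: "is_state \<psi>" and "s0 \<in> S"
    and bound: "\<And>s. s \<in> S \<Longrightarrow> L \<le> ereal (2 * sqrt (Re (\<psi> (cstar (a - s) * (a - s)))))"
  shows "L \<le> ereal (2 * gns_dist \<psi> S a)"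
proof (rule ereal_le_epsilon2)
  fix e :: real assume e: "e > 0"
  have "0 \<le> gns_norm \<psi> (a - s)" for s
    using sqrt_state_le_gns_norm[OF st, of "a - s"] st
    by (simp add: is_state_def) (meson order_trans real_sqrt_ge_zero)
  hence bdd: "bdd_below ((\<lambda>s. gns_norm \<psi> (a - s)) ` S)" by (rule bdd_belowI2)
  have "(INF s\<in>S. gns_norm \<psi> (a - s)) < gns_dist \<psi> S a + e / 2"
    using e by (simp add: gns_dist_def)
  then obtain s where s: "s \<in> S" "gns_norm \<psi> (a - s) < gns_dist \<psi> S a + e / 2"
    using cINF_less_iff[OF _ bdd] \<open>s0 \<in> S\<close> by blast
  have "L \<le> ereal (2 * gns_norm \<psi> (a - s))"
    using bound[OF s(1)] sqrt_state_le_gns_norm[OF st, of "a - s"] by (simp add: order_trans)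
  also have "\<dots> \<le> ereal (2 * gns_dist \<psi> S a) + ereal e"
    using s(2) by simp
  finally show "L \<le> ereal (2 * gns_dist \<psi> S a) + ereal e" .
qed

theorem theorem5p2:
  fixes S :: "'a::cstar_algebra set"
    and \<pi> \<Phi> :: "'a \<Rightarrow> 'h::chilbert \<Rightarrow> 'h"
    and \<psi> :: "'a \<Rightarrow> complex"
    and \<Delta> :: "nat \<Rightarrow> 'a"
  assumes "operator_system S"
    and "unital_star_rep \<pi>"
    and "ucp_map \<Phi>"
    and "\<forall>s\<in>S. \<Phi> s = \<pi> s"
    and "is_state \<psi>"
    and "characteristic_sequence \<psi> \<Delta>"
    and "\<forall>n. \<Delta> n \<in> S"
  shows "\<forall>a. limsup (\<lambda>n. ereal (opnorm (\<lambda>h. \<Phi> a (\<pi> (\<Delta> n) h) - \<pi> a (\<pi> (\<Delta> n) h))))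
              \<le> ereal (2 * gns_dist \<psi> S a)
          \<and> (\<lambda>n. opnorm (\<lambda>h. \<pi> (cstar (\<Delta> n)) (\<Phi> a (\<pi> (\<Delta> n) h) - \<pi> a (\<pi> (\<Delta> n) h))))
              \<longlonglongrightarrow> 0"
proof (intro allI conjI)
  fix a
  have "1 \<in> S" using assms(1) by (simp add: operator_system_def)
  thus "limsup (\<lambda>n. ereal (opnorm (\<lambda>h. \<Phi> a (\<pi> (\<Delta> n) h) - \<pi> a (\<pi> (\<Delta> n) h))))
      \<le> ereal (2 * gns_dist \<psi> S a)"
    using limsup_compressed_difference_le[OF assms(2-7)] by (rule le_twice_gns_dist[OF assms(5)])
  show "(\<lambda>n. opnorm (\<lambda>h. \<pi> (cstar (\<Delta> n)) (\<Phi> a (\<pi> (\<Delta> n) h) - \<pi> a (\<pi> (\<Delta> n) h)))) \<longlonglongrightarrow> 0"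
    by (rule compressed_difference_tendsto_zero[OF assms(2-7)])
qed

end
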